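(* Let $N\ge 1$, let $\xi\in\mathbf{C}^*$, let $a_1,\dots,a_N\in\mathbf{C}^*$, and let $t_1,\dots,t_N\in\mathbf{C}$. On the phase space $M_{2N}=\Sigma_{t_1}\times\cdots\times\Sigma_{t_N}$ (notation in the context), let $\mathcal{T}(z)$ be the reflection monodromy matrix, $t(z)=\tfrac12\operatorname{tr}\mathcal{T}(z)$ the reflection transfer matrix, and $P_0,\dots,P_N$ the reflection Hamiltonians. Then $$\lim_{z\to 1}(z-z^{-1})\,t(z)=\sum_{j=0}^N P_j=(\xi-\xi^{-1})\prod_{k=1}^N\big(\omega_k-a_k^2-a_k^{-2}\big),$$ where $\omega_k=t_k$ is the value of the Casimir at site $k$.
   Context: $SL_2^*$ denotes the Poisson variety with coordinate ring $\mathbf{C}[e,f,k^{\pm1}]$ and Poisson brackets $\{k,e\}=ke$, $\{k,f\}=-kf$, $\{e,f\}=2(k^2-k^{-2})$. The function $\omega=k^2+k^{-2}+ef$ is a Casimir and $\Sigma_t=\{\omega=t\}$ is a (two-dimensional, for generic $t$) symplectic leaf. The phase space is $M_{2N}=\Sigma_{t_1}\times\cdots\times\Sigma_{t_N}$ with coordinates $(e_j,f_j,k_j)$ at site $j$ (functions at different sites Poisson commute), and $\omega_j=k_j^2+k_j^{-2}+e_jf_j=t_j$. Set $L_j(z)=\begin{pmatrix} zk_j-z^{-1}k_j^{-1} & e_j\\ f_j & zk_j^{-1}-z^{-1}k_j\end{pmatrix}$ and $K(z)=\begin{pmatrix}\xi z-z^{-1}\xi^{-1}&0\\0&\xi z^{-1}-z\xi^{-1}\end{pmatrix}$.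 The reflection monodromy matrix is $$\mathcal{T}(z)=\frac{1}{z-z^{-1}}L_1(a_1z)\cdots L_N(a_Nz)\,K(z)\,L_N(z/a_N)\cdots L_1(z/a_1)=\begin{pmatrix}A(z)&B(z)\\C(z)&D(z)\end{pmatrix},$$ and $t(z)=\frac12\operatorname{tr}\mathcal{T}(z)$. With $w=z^2$, the reflection Hamiltonians $P_0,\dots,P_N$ are the functions on $M_{2N}$ determined by the expansion $$t(z)=\frac12\Big(\frac{w+1}{w-1}\Big)\Big(P_N\frac{w^N+w^{-N}}{2}+P_{N-1}\frac{w^{N-1}+w^{1-N}}{2}+\cdots+P_1\frac{w+w^{-1}}{2}+P_0\Big).$$ *)

theory Defs
  imports "HOL-Analysis.Analysis"
begin

type_synonym mat2 = "complex^2^2"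

definition mat2 :: "complex \<Rightarrow> complex \<Rightarrow> complex \<Rightarrow> complex \<Rightarrow> mat2" where
  "mat2 a b c d = (\<chi> i j. if i = 1 then (if j = 1 then a else b) else (if j = 1 then c else d))"

definition laxL :: "complex \<Rightarrow> complex \<Rightarrow> complex \<Rightarrow> complex \<Rightarrow> mat2" where
  "laxL e f k z = mat2 (z * k - inverse z * inverse k) e f (z * inverse k - inverse z * k)"

definition reflK :: "complex \<Rightarrow> complex \<Rightarrow> mat2" where
  "reflK \<xi> z = mat2 (\<xi> * z - inverse z * inverse \<xi>) 0 0 (\<xi> * inverse z - z * inverse \<xi>)"

fun leftProd :: "(nat \<Rightarrow> complex) \<Rightarrow> (nat \<Rightarrow> complex) \<Rightarrow> (nat \<Rightarrow> complex) \<Rightarrow> (nat \<Rightarrow> complex)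
    \<Rightarrow> nat \<Rightarrow> complex \<Rightarrow> mat2" where
  "leftProd a e f k 0 z = mat 1"
| "leftProd a e f k (Suc n) z = leftProd a e f k n z ** laxL (e (Suc n)) (f (Suc n)) (k (Suc n)) (a (Suc n) * z)"

fun rightProd :: "(nat \<Rightarrow> complex) \<Rightarrow> (nat \<Rightarrow> complex) \<Rightarrow> (nat \<Rightarrow> complex) \<Rightarrow> (nat \<Rightarrow> complex)
    \<Rightarrow> nat \<Rightarrow> complex \<Rightarrow> mat2" where
  "rightProd a e f k 0 z = mat 1"
| "rightProd a e f k (Suc n) z = laxL (e (Suc n)) (f (Suc n)) (k (Suc n)) (z / a (Suc n)) ** rightProd a e f k n z"

definition reflMonodromy :: "nat \<Rightarrow> complex \<Rightarrow> (nat \<Rightarrow> complex) \<Rightarrow> (nat \<Rightarrow> complex) \<Rightarrow> (nat \<Rightarrow> complex)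
    \<Rightarrow> (nat \<Rightarrow> complex) \<Rightarrow> complex \<Rightarrow> mat2" where
  "reflMonodromy N \<xi> a e f k z =
     (let M = leftProd a e f k N z ** reflK \<xi> z ** rightProd a e f k N z
      in (\<chi> i j. (1 / (z - inverse z)) * M $ i $ j))"

definition reflTransfer :: "nat \<Rightarrow> complex \<Rightarrow> (nat \<Rightarrow> complex) \<Rightarrow> (nat \<Rightarrow> complex) \<Rightarrow> (nat \<Rightarrow> complex)
    \<Rightarrow> (nat \<Rightarrow> complex) \<Rightarrow> complex \<Rightarrow> complex" where
  "reflTransfer N \<xi> a e f k z =
     (let T = reflMonodromy N \<xi> a e f k z in (T $ 1 $ 1 + T $ 2 $ 2) / 2)"

text \<open>P = (P_0,...,P_N) are the reflection Hamiltonians (at the given point of the phase space):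
  the coefficients in the expansion of t(z), with w = z^2, valid for all z where t is defined.\<close>
definition reflHamiltonians :: "nat \<Rightarrow> complex \<Rightarrow> (nat \<Rightarrow> complex) \<Rightarrow> (nat \<Rightarrow> complex) \<Rightarrow> (nat \<Rightarrow> complex)
    \<Rightarrow> (nat \<Rightarrow> complex) \<Rightarrow> (nat \<Rightarrow> complex) \<Rightarrow> bool" where
  "reflHamiltonians N \<xi> a e f k P \<longleftrightarrow>
     (\<forall>z. z \<noteq> 0 \<and> z\<^sup>2 \<noteq> 1 \<longrightarrow>
        (let w = z\<^sup>2 in
          reflTransfer N \<xi> a e f k z =
            (1/2) * ((w + 1) / (w - 1)) *
              (P 0 + (\<Sum>j = 1..N. P j * (w ^ j + inverse w ^ j) / 2))))"

end

theory Submission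
  imports Defs "HOL-Computational_Algebra.Polynomial"
begin

text \<open>
  Write \<open>tr \<T>(z) = tr (K(z) G(z)) / (z - z\<^sup>-\<^sup>1)\<close> with \<open>G(z) = L\<^sub>N(z/a\<^sub>N)\<cdots>L\<^sub>1(z/a\<^sub>1) L\<^sub>1(a\<^sub>1z)\<cdots>L\<^sub>N(a\<^sub>Nz)\<close>.
  Since \<open>L(z\<^sup>-\<^sup>1) = -adj L(z)\<close>, \<open>K(z\<^sup>-\<^sup>1) = adj K(z)\<close> and \<open>L(-z)\<close> is \<open>-L(z)\<close> conjugated by
  \<open>diag(1,-1)\<close>, the numerator \<open>\<tau>(z) = tr (K(z) G(z))\<close> is invariant under \<open>z \<mapsto> z\<^sup>-\<^sup>1\<close> and odd in \<open>z\<close>;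
  in particular it vanishes at \<open>z = \<plusminus>i\<close>. Clearing denominators, \<open>z\<^sup>2\<^sup>N\<^sup>+\<^sup>1 \<tau>(z)\<close> is a polynomial
  divisible by \<open>z\<^sup>2 + 1\<close>, and the quotient is even and palindromic of degree \<open>4N\<close>. Hence
  \<open>\<tau>(z) = (z + z\<^sup>-\<^sup>1) (u\<^sub>0 + \<Sum>\<^sub>j\<^sub>\<ge>\<^sub>1 u\<^sub>j (w\<^sup>j + w\<^sup>-\<^sup>j))\<close>, which is exactly the expansion defining the Hamiltonians.
  Then \<open>(z - z\<^sup>-\<^sup>1) t(z) = \<tau>(z)/2\<close> tends both to \<open>\<Sum> P\<^sub>j\<close> and to \<open>\<tau>(1)/2\<close>. At \<open>z = 1\<close> the Casimir
  relation gives \<open>L(a\<^sup>-\<^sup>1) L(a) = (\<omega> - a\<^sup>2 - a\<^sup>-\<^sup>2) I\<close>, so \<open>G(1)\<close> is scalar and \<open>\<tau>(1)\<close> is read off.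
\<close>

lemma matrix_mult_2_nth:
  "((X::'a::semiring_1^2^2) ** Y) $ i $ j = X$i$1 * Y$1$j + X$i$2 * Y$2$j"
  by (simp add: matrix_matrix_mult_def sum_2)

lemma mat2_nth [simp]:
  "mat2 a b c d $ 1 $ 1 = a" "mat2 a b c d $ 1 $ 2 = b"
  "mat2 a b c d $ 2 $ 1 = c" "mat2 a b c d $ 2 $ 2 = d"
  by (simp_all add: mat2_def)

lemma mat2_eq_iff:
  "(X::mat2) = Y \<longleftrightarrow> X$1$1 = Y$1$1 \<and> X$1$2 = Y$1$2 \<and> X$2$1 = Y$2$1 \<and> X$2$2 = Y$2$2"
  by (auto simp: vec_eq_iff forall_2)

definition tr2 :: "mat2 \<Rightarrow> complex" where
  "tr2 M = M$1$1 + M$2$2"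

definition adj2 :: "mat2 \<Rightarrow> mat2" where
  "adj2 M = mat2 (M$2$2) (-M$1$2) (-M$2$1) (M$1$1)"

text \<open>Conjugation by \<open>diag(1,-1)\<close>.\<close>
definition diag_conj2 :: "mat2 \<Rightarrow> mat2" where
  "diag_conj2 M = mat2 (M$1$1) (-M$1$2) (-M$2$1) (M$2$2)"

definition scale2 :: "complex \<Rightarrow> mat2 \<Rightarrow> mat2" where
  "scale2 c M = (\<chi> i j. c * M$i$j)"

lemma scale2_nth [simp]: "scale2 c A $ i $ j = c * A $ i $ j"
  by (simp add: scale2_def)

lemma scale2_mult: "scale2 c A ** scale2 d B = scale2 (c * d) (A ** B)"
  by (simp add: mat2_eq_iff matrix_mult_2_nth algebra_simps)

lemma adj2_mult: "adj2 (A ** B) = adj2 B ** adj2 A"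
  by (simp add: mat2_eq_iff adj2_def matrix_mult_2_nth algebra_simps)

lemma diag_conj2_mult: "diag_conj2 (A ** B) = diag_conj2 A ** diag_conj2 B"
  by (simp add: mat2_eq_iff diag_conj2_def matrix_mult_2_nth algebra_simps)

lemma tr2_adj2: "tr2 (adj2 A) = tr2 A"
  by (simp add: tr2_def adj2_def)

lemma tr2_mult_commute: "tr2 (A ** B) = tr2 (B ** A)"
  by (simp add: tr2_def matrix_mult_2_nth algebra_simps)

lemma uminus_mult_uminus: "(- A) ** B ** (- C) = A ** B ** C" for A B C :: mat2
  by (simp add: mat2_eq_iff matrix_mult_2_nth algebra_simps)

section \<open>Symmetries of the Lax and reflection matrices\<close>

lemma laxL_inverse: "laxL e f k (inverse z) = - adj2 (laxL e f k z)"
  by (simp add: mat2_eq_iff laxL_def adj2_def algebra_simps)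

lemma laxL_uminus: "laxL e f k (- z) = - diag_conj2 (laxL e f k z)"
  by (simp add: mat2_eq_iff laxL_def diag_conj2_def algebra_simps)

lemma reflK_inverse: "reflK \<xi> (inverse z) = adj2 (reflK \<xi> z)"
  by (simp add: mat2_eq_iff reflK_def adj2_def algebra_simps)

lemma laxL_inverse_mult_laxL:
  assumes "a \<noteq> 0" "k \<noteq> 0" and "k\<^sup>2 + inverse (k\<^sup>2) + e * f = t"
  shows "laxL e f k (inverse a) ** laxL e f k a = mat (t - a\<^sup>2 - inverse (a\<^sup>2))"
  using assms unfolding assms(3)[symmetric]
  by (simp add: mat2_eq_iff matrix_mult_2_nth laxL_def mat_def field_simps power2_eq_square)

definition doubleProd :: "(nat \<Rightarrow> complex) \<Rightarrow> (nat \<Rightarrow> complex) \<Rightarrow> (nat \<Rightarrow> complex) \<Rightarrow> (nat \<Rightarrow> complex)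
    \<Rightarrow> nat \<Rightarrow> complex \<Rightarrow> mat2" where
  "doubleProd a e f k n z = rightProd a e f k n z ** leftProd a e f k n z"

lemma doubleProd_0: "doubleProd a e f k 0 z = mat 1"
  by (simp add: doubleProd_def)

lemma doubleProd_Suc:
  "doubleProd a e f k (Suc n) z = laxL (e (Suc n)) (f (Suc n)) (k (Suc n)) (z / a (Suc n))
     ** doubleProd a e f k n z ** laxL (e (Suc n)) (f (Suc n)) (k (Suc n)) (a (Suc n) * z)"
  by (simp add: doubleProd_def matrix_mul_assoc)

lemma doubleProd_inverse: "doubleProd a e f k n (inverse z) = adj2 (doubleProd a e f k n z)"
proof (induction n)
  case 0
  show ?case by (simp add: doubleProd_0 mat2_eq_iff adj2_def mat_def)
next
  case (Suc n)
  have "inverse z / a (Suc n) = inverse (a (Suc n) * z)"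
    and "a (Suc n) * inverse z = inverse (z / a (Suc n))"
    by (simp_all add: field_simps)
  then show ?case
    unfolding doubleProd_Suc Suc
    by (simp only: laxL_inverse) (simp add: uminus_mult_uminus adj2_mult matrix_mul_assoc)
qed

lemma doubleProd_uminus: "doubleProd a e f k n (- z) = diag_conj2 (doubleProd a e f k n z)"
proof (induction n)
  case 0
  show ?case by (simp add: doubleProd_0 mat2_eq_iff diag_conj2_def mat_def)
next
  case (Suc n)
  have "- z / a (Suc n) = - (z / a (Suc n))" and "a (Suc n) * - z = - (a (Suc n) * z)"
    by simp_all
  then show ?case
    unfolding doubleProd_Suc Suc
    by (simp only: laxL_uminus) (simp add: uminus_mult_uminus diag_conj2_mult matrix_mul_assoc)
qed

lemma doubleProd_at_1:
  assumes "\<forall>j\<in>{1..N}. a j \<noteq> 0 \<and> k j \<noteq> 0 \<and> (k j)\<^sup>2 + inverse ((k j)\<^sup>2) + e j * f j = t j"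
    and "n \<le> N"
  shows "doubleProd a e f k n 1 = mat (\<Prod>j = 1..n. t j - (a j)\<^sup>2 - inverse ((a j)\<^sup>2))"
  using \<open>n \<le> N\<close>
proof (induction n)
  case 0
  show ?case by (simp add: doubleProd_0)
next
  case (Suc n)
  let ?L = "laxL (e (Suc n)) (f (Suc n)) (k (Suc n))"
  let ?c = "\<Prod>j = 1..n. t j - (a j)\<^sup>2 - inverse ((a j)\<^sup>2)"
  have "doubleProd a e f k (Suc n) 1 = ?L (inverse (a (Suc n))) ** mat ?c ** ?L (a (Suc n))"
    using Suc by (simp add: doubleProd_Suc divide_inverse)
  also have "\<dots> = mat ?c ** (?L (inverse (a (Suc n))) ** ?L (a (Suc n)))"
    by (simp add: mat2_eq_iff matrix_mult_2_nth mat_def algebra_simps)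
  also have "?L (inverse (a (Suc n))) ** ?L (a (Suc n))
      = mat (t (Suc n) - (a (Suc n))\<^sup>2 - inverse ((a (Suc n))\<^sup>2))"
    using assms Suc.prems by (intro laxL_inverse_mult_laxL) auto
  finally show ?case
    by (simp add: mat2_eq_iff matrix_mult_2_nth mat_def)
qed

definition reflTrace :: "nat \<Rightarrow> complex \<Rightarrow> (nat \<Rightarrow> complex) \<Rightarrow> (nat \<Rightarrow> complex) \<Rightarrow> (nat \<Rightarrow> complex)
    \<Rightarrow> (nat \<Rightarrow> complex) \<Rightarrow> complex \<Rightarrow> complex" where
  "reflTrace N \<xi> a e f k z = tr2 (leftProd a e f k N z ** reflK \<xi> z ** rightProd a e f k N z)"

lemma reflTransfer_eq_reflTrace:
  "reflTransfer N \<xi> a e f k z = reflTrace N \<xi> a e f k z / (2 * (z - inverse z))"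
  by (simp add: reflTransfer_def reflMonodromy_def reflTrace_def tr2_def divide_simps)

lemma reflTrace_eq_tr2_doubleProd:
  "reflTrace N \<xi> a e f k z = tr2 (reflK \<xi> z ** doubleProd a e f k N z)"
  by (metis reflTrace_def doubleProd_def matrix_mul_assoc tr2_mult_commute)

lemma reflTrace_inverse: "reflTrace N \<xi> a e f k (inverse z) = reflTrace N \<xi> a e f k z"
  unfolding reflTrace_eq_tr2_doubleProd doubleProd_inverse reflK_inverse
  by (metis adj2_mult tr2_adj2 tr2_mult_commute)

lemma reflTrace_uminus: "reflTrace N \<xi> a e f k (- z) = - reflTrace N \<xi> a e f k z"
  unfolding reflTrace_eq_tr2_doubleProd doubleProd_uminus
  by (simp add: tr2_def matrix_mult_2_nth diag_conj2_def reflK_def algebra_simps)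

lemma reflTrace_at_ii: "reflTrace N \<xi> a e f k \<i> = 0"
  using reflTrace_inverse[of N \<xi> a e f k \<i>] reflTrace_uminus[of N \<xi> a e f k \<i>] by simp

lemma reflTrace_at_1:
  assumes "\<forall>j\<in>{1..N}. a j \<noteq> 0 \<and> k j \<noteq> 0 \<and> (k j)\<^sup>2 + inverse ((k j)\<^sup>2) + e j * f j = t j"
  shows "reflTrace N \<xi> a e f k 1 = 2 * (\<xi> - inverse \<xi>) * (\<Prod>j = 1..N. t j - (a j)\<^sup>2 - inverse ((a j)\<^sup>2))"
  unfolding reflTrace_eq_tr2_doubleProd doubleProd_at_1[OF assms order.refl]
  by (simp add: tr2_def matrix_mult_2_nth reflK_def mat_def algebra_simps)

section \<open>Clearing denominators\<close>

definition poly_mat_eval :: "complex \<Rightarrow> complex poly^2^2 \<Rightarrow> mat2" where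
  "poly_mat_eval z X = (\<chi> i j. poly (X$i$j) z)"

lemma poly_mat_eval_mult: "poly_mat_eval z (X ** Y) = poly_mat_eval z X ** poly_mat_eval z Y"
  by (simp add: poly_mat_eval_def mat2_eq_iff matrix_mult_2_nth)

lemma degree_matrix_mult_le:
  assumes "\<And>i j. degree ((X::complex poly^2^2)$i$j) \<le> dx" "\<And>i j. degree (Y$i$j) \<le> dy"
  shows "degree ((X ** Y)$i$j) \<le> dx + dy"
proof -
  have "degree (X$i$p * Y$p$j) \<le> dx + dy" for p
    by (rule order.trans[OF degree_mult_le]) (intro add_mono assms)
  then show ?thesis
    unfolding matrix_mult_2_nth by (meson degree_add_le)
qed

text \<open>The polynomial matrix \<open>z L(c z)\<close>.\<close>
definition laxL_poly :: "complex \<Rightarrow> complex \<Rightarrow> complex \<Rightarrow> complex \<Rightarrow> complex poly^2^2" where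
  "laxL_poly c e f k = (\<chi> i j. if i = 1 then (if j = 1 then [:- inverse (c * k), 0, c * k:] else [:0, e:])
      else (if j = 1 then [:0, f:] else [:- k * inverse c, 0, c * inverse k:]))"

lemma poly_mat_eval_laxL_poly:
  "z \<noteq> 0 \<Longrightarrow> poly_mat_eval z (laxL_poly c e f k) = scale2 z (laxL e f k (c * z))"
  by (simp add: mat2_eq_iff poly_mat_eval_def laxL_poly_def laxL_def field_simps power2_eq_square)

lemma degree_laxL_poly: "degree (laxL_poly c e f k $ i $ j) \<le> 2"
  using exhaust_2[of i] exhaust_2[of j] by (auto simp: laxL_poly_def)

lemma doubleProd_polynomial:
  "\<exists>A::complex poly^2^2. (\<forall>i j. degree (A$i$j) \<le> 4 * n) \<and>
     (\<forall>z. z \<noteq> 0 \<longrightarrow> poly_mat_eval z A = scale2 (z ^ (2 * n)) (doubleProd a e f k n z))"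
proof (induction n)
  case 0
  show ?case
    by (rule exI[of _ "mat 1"]) (simp add: poly_mat_eval_def doubleProd_0 mat2_eq_iff mat_def)
next
  case (Suc n)
  then obtain A where deg: "\<forall>i j. degree (A$i$j) \<le> 4 * n"
    and eval: "\<forall>z. z \<noteq> 0 \<longrightarrow> poly_mat_eval z A = scale2 (z ^ (2 * n)) (doubleProd a e f k n z)"
    by blast
  let ?Lp = "\<lambda>c. laxL_poly c (e (Suc n)) (f (Suc n)) (k (Suc n))"
  define A' where "A' = ?Lp (inverse (a (Suc n))) ** A ** ?Lp (a (Suc n))"
  have "degree (A'$i$j) \<le> 4 * Suc n" for i j
  proof -
    have "degree (A'$i$j) \<le> (2 + 4 * n) + 2"
      unfolding A'_def by (intro degree_matrix_mult_le degree_laxL_poly) (use deg in auto)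
    then show ?thesis by simp
  qed
  moreover have "poly_mat_eval z A' = scale2 (z ^ (2 * Suc n)) (doubleProd a e f k (Suc n) z)"
    if z: "z \<noteq> 0" for z
  proof -
    have "z / a (Suc n) = inverse (a (Suc n)) * z" by (simp add: field_simps)
    then show ?thesis
      unfolding A'_def poly_mat_eval_mult poly_mat_eval_laxL_poly[OF z] eval[rule_format, OF z]
        doubleProd_Suc scale2_mult
      by (simp add: algebra_simps power2_eq_square)
  qed
  ultimately show ?case by blast
qed

lemma reflTrace_polynomial_factor:
  "\<exists>U. degree U \<le> 4 * N \<and>
     (\<forall>z. z \<noteq> 0 \<longrightarrow> reflTrace N \<xi> a e f k z * z ^ (2 * N + 1) = (z\<^sup>2 + 1) * poly U z)"
proof -
  obtain A where degA: "\<forall>i j. degree (A$i$j) \<le> 4 * N"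
    and evalA: "\<forall>z. z \<noteq> 0 \<longrightarrow> poly_mat_eval z A = scale2 (z ^ (2 * N)) (doubleProd a e f k N z)"
    using doubleProd_polynomial by blast
  define T where "T = [:- inverse \<xi>, 0, \<xi>:] * A$1$1 + [:\<xi>, 0, - inverse \<xi>:] * A$2$2"
  have T: "poly T z = reflTrace N \<xi> a e f k z * z ^ (2 * N + 1)" if z: "z \<noteq> 0" for z
  proof -
    have "poly (A$i$j) z = z ^ (2 * N) * doubleProd a e f k N z $ i $ j" for i j
      using arg_cong[OF evalA[rule_format, OF z], of "\<lambda>M. M$i$j"] by (simp add: poly_mat_eval_def)
    then show ?thesis
      unfolding T_def reflTrace_eq_tr2_doubleProd
      by (simp add: tr2_def matrix_mult_2_nth reflK_def z field_simps power2_eq_square)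
  qed
  have "degree T \<le> 2 + 4 * N"
    unfolding T_def using degA
    by (intro degree_add_le order.trans[OF degree_mult_le] add_mono) (auto simp: degree_pCons_eq_if)
  have "poly T \<i> = 0"
    using T[of \<i>] by (simp add: reflTrace_at_ii)
  then obtain T' where T': "T = [:- \<i>, 1:] * T'"
    by (metis dvdE poly_eq_0_iff_dvd)
  have "poly T' (- \<i>) = 0"
    using T[of "- \<i>"] T' by (simp add: reflTrace_uminus reflTrace_at_ii)
  then obtain U where U: "T' = [:\<i>, 1:] * U"
    by (metis dvdE minus_minus poly_eq_0_iff_dvd)
  have "[:- \<i>, 1:] * [:\<i>, 1:] = [:1, 0, 1:]"
    by (simp flip: poly_eq_poly_eq_iff add: fun_eq_iff algebra_simps)
  then have TU: "T = [:1, 0, 1:] * U"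
    using T' U by (metis mult.assoc)
  have "degree U \<le> 4 * N"
  proof (cases "U = 0")
    case False
    then have "degree T = 2 + degree U"
      unfolding TU by (subst degree_mult_eq) auto
    with \<open>degree T \<le> 2 + 4 * N\<close> show ?thesis by simp
  qed simp
  moreover have "poly T z = (z\<^sup>2 + 1) * poly U z" for z
    unfolding TU by (simp add: algebra_simps power2_eq_square)
  ultimately show ?thesis using T by metis
qed

section \<open>Even palindromic polynomials\<close>

lemma poly_eqI_infinite:
  fixes p q :: "'a::idom poly"
  assumes "infinite A" and "\<And>z. z \<in> A \<Longrightarrow> poly p z = poly q z"
  shows "p = q"
proof (rule ccontr)
  assume "p \<noteq> q"
  then have "finite {z. poly (p - q) z = 0}"
    by (intro poly_roots_finite) simp
  moreover have "A \<subseteq> {z. poly (p - q) z = 0}"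
    using assms(2) by auto
  ultimately show False
    using assms(1) finite_subset by blast
qed

lemma poly_eq_sum_atMost:
  fixes p :: "'a::{comm_semiring_0,semiring_1} poly"
  assumes "degree p \<le> D"
  shows "poly p z = (\<Sum>i\<le>D. coeff p i * z ^ i)"
  unfolding poly_altdef
  by (rule sum.mono_neutral_left) (use assms in \<open>auto simp: coeff_eq_0\<close>)

lemma coeff_palindromic:
  fixes p :: "'a::field poly"
  assumes "degree p \<le> D" "infinite A" "0 \<notin> A"
    and "\<And>z. z \<in> A \<Longrightarrow> poly p z = z ^ D * poly p (inverse z)"
    and "i \<le> D"
  shows "coeff p i = coeff p (D - i)"
proof -
  define q where "q = (\<Sum>i\<le>D. monom (coeff p (D - i)) i)"
  have "poly p z = poly q z" if "z \<in> A" for z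
  proof -
    have "z \<noteq> 0" using that assms(3) by auto
    have "z ^ D * poly p (inverse z) = (\<Sum>i\<le>D. coeff p i * z ^ (D - i))"
      unfolding poly_eq_sum_atMost[OF assms(1)] sum_distrib_left
      by (rule sum.cong) (auto simp: power_diff[OF \<open>z \<noteq> 0\<close>] divide_inverse power_inverse)
    also have "\<dots> = (\<Sum>i\<le>D. coeff p (D - i) * z ^ i)"
      by (rule sum.reindex_bij_witness[of _ "\<lambda>i. D - i" "\<lambda>i. D - i"]) auto
    finally show ?thesis
      using assms(4)[OF that] by (simp add: q_def poly_sum poly_monom)
  qed
  then have "p = q"
    using assms(2) by (rule poly_eqI_infinite[rotated])
  moreover have "coeff q i = coeff p (D - i)"
    using assms(5) by (simp add: q_def coeff_sum coeff_monom)
  ultimately show ?thesis by simp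
qed

lemma coeff_odd_eq_0:
  fixes p :: "'a::{idom,ring_char_0} poly"
  assumes "infinite A" and "\<And>z. z \<in> A \<Longrightarrow> poly p (- z) = poly p z" and "odd i"
  shows "coeff p i = 0"
proof -
  have "p = pcompose p [:0, -1:]"
    using assms(1) by (rule poly_eqI_infinite) (simp add: poly_pcompose assms(2))
  then have "coeff p i = (-1) ^ i * coeff p i"
    by (metis coeff_pcompose_linear)
  then show ?thesis
    using \<open>odd i\<close> by simp
qed

lemma sum_even_powers:
  fixes v :: "nat \<Rightarrow> 'a::comm_ring_1"
  assumes "\<And>i. odd i \<Longrightarrow> v i = 0"
  shows "(\<Sum>i\<le>2 * M. v i * x ^ i) = (\<Sum>l\<le>M. v (2 * l) * (x\<^sup>2) ^ l)"
proof (induction M)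
  case (Suc M)
  have "2 * Suc M = Suc (Suc (2 * M))" by simp
  then show ?case
    using Suc assms by (simp del: mult_Suc_right add: power_mult[symmetric] mult.assoc)
qed simp

lemma sum_palindromic_powers:
  fixes v :: "nat \<Rightarrow> 'a::field"
  assumes sym: "\<And>l. l \<le> 2 * N \<Longrightarrow> v l = v (2 * N - l)" and "y \<noteq> 0"
  shows "(\<Sum>l\<le>2 * N. v l * y ^ l) = y ^ N * (v N + (\<Sum>j = 1..N. v (N + j) * (y ^ j + inverse y ^ j)))"
proof -
  have split: "{..2 * N} = {..<N} \<union> ({N} \<union> {N<..2 * N})" by auto
  have "(\<Sum>l\<le>2 * N. v l * y ^ l)
      = (\<Sum>l<N. v l * y ^ l) + (v N * y ^ N + (\<Sum>l\<in>{N<..2 * N}. v l * y ^ l))"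
    unfolding split by (subst sum.union_disjoint; auto)+
  also have "(\<Sum>l\<in>{N<..2 * N}. v l * y ^ l) = (\<Sum>j = 1..N. v (N + j) * y ^ (N + j))"
    by (rule sum.reindex_bij_witness[of _ "\<lambda>j. N + j" "\<lambda>l. l - N"]) auto
  also have "(\<Sum>l<N. v l * y ^ l) = (\<Sum>j = 1..N. v (N - j) * y ^ (N - j))"
    by (rule sum.reindex_bij_witness[of _ "\<lambda>j. N - j" "\<lambda>l. N - l"]) auto
  also have "\<dots> = (\<Sum>j = 1..N. v (N + j) * (y ^ N * inverse y ^ j))"
  proof (rule sum.cong)
    fix j assume j: "j \<in> {1..N}"
    then have "v (N - j) = v (N + j)"
      using sym[of "N - j"] by (simp add: numeral_2_eq_2)
    then show "v (N - j) * y ^ (N - j) = v (N + j) * (y ^ N * inverse y ^ j)"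
      using j \<open>y \<noteq> 0\<close> by (simp add: power_diff field_simps)
  qed simp
  finally show ?thesis
    by (simp add: sum.distrib sum_distrib_left power_add algebra_simps)
qed

lemma poly_even_palindromic_expansion:
  fixes p :: "'a::field_char_0 poly"
  assumes "degree p \<le> 4 * M" "infinite A" "0 \<notin> A"
    and "\<And>z. z \<in> A \<Longrightarrow> poly p z = z ^ (4 * M) * poly p (inverse z)"
    and "\<And>z. z \<in> A \<Longrightarrow> poly p (- z) = poly p z"
    and "z \<noteq> 0"
  shows "poly p z = (z\<^sup>2) ^ M * (coeff p (2 * M)
           + (\<Sum>j = 1..M. coeff p (2 * (M + j)) * ((z\<^sup>2) ^ j + inverse (z\<^sup>2) ^ j)))"
proof -
  have odd: "coeff p i = 0" if "odd i" for i
    using assms(2,5) that by (rule coeff_odd_eq_0)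
  have "poly p z = (\<Sum>i\<le>2 * (2 * M). coeff p i * z ^ i)"
    using assms(1) by (intro poly_eq_sum_atMost) simp
  also have "\<dots> = (\<Sum>l\<le>2 * M. coeff p (2 * l) * (z\<^sup>2) ^ l)"
    using odd by (rule sum_even_powers)
  also have "\<dots> = (z\<^sup>2) ^ M * (coeff p (2 * M)
           + (\<Sum>j = 1..M. coeff p (2 * (M + j)) * ((z\<^sup>2) ^ j + inverse (z\<^sup>2) ^ j)))"
  proof (rule sum_palindromic_powers[where v = "\<lambda>l. coeff p (2 * l)"])
    fix l assume "l \<le> 2 * M"
    then have "coeff p (2 * l) = coeff p (4 * M - 2 * l)"
      using assms(1-4) by (intro coeff_palindromic) auto
    then show "coeff p (2 * l) = coeff p (2 * (2 * M - l))"
      by (simp add: diff_mult_distrib2)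
  qed (use \<open>z \<noteq> 0\<close> in simp)
  finally show ?thesis .
qed

section \<open>Expansion of the trace and the limit at \<open>z = 1\<close>\<close>

lemma reflTrace_expansion:
  obtains u where "\<And>z. z \<noteq> 0 \<Longrightarrow> reflTrace N \<xi> a e f k z
      = (z + inverse z) * (u 0 + (\<Sum>j = 1..N. u j * ((z\<^sup>2) ^ j + inverse (z\<^sup>2) ^ j)))"
proof -
  let ?\<tau> = "reflTrace N \<xi> a e f k"
  obtain U where degU: "degree U \<le> 4 * N"
    and U: "\<And>z. z \<noteq> 0 \<Longrightarrow> ?\<tau> z * z ^ (2 * N + 1) = (z\<^sup>2 + 1) * poly U z"
    using reflTrace_polynomial_factor by blast
  define A where "A = UNIV - {0, \<i>, - \<i>}"
  have "infinite A"
    unfolding A_def by (rule Diff_infinite_finite) (auto simp: infinite_UNIV_char_0)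
  have A: "z \<noteq> 0" "z\<^sup>2 + 1 \<noteq> 0" if "z \<in> A" for z
    using that power2_eq_iff[of z \<i>] by (auto simp: A_def add_eq_0_iff2)
  have "poly U z = z ^ (4 * N) * poly U (inverse z)" if "z \<in> A" for z
  proof -
    have "z ^ (4 * N + 2) = z ^ (2 * N + 1) * z ^ (2 * N + 1)"
      by (simp flip: power_add)
    then have "(z\<^sup>2 + 1) * poly U z = ?\<tau> z * inverse z ^ (2 * N + 1) * z ^ (4 * N + 2)"
      using A[OF that] U[of z] by (simp add: power_inverse field_simps)
    also have "\<dots> = ?\<tau> (inverse z) * inverse z ^ (2 * N + 1) * z ^ (4 * N + 2)"
      by (simp only: reflTrace_inverse)
    also have "\<dots> = ((inverse z)\<^sup>2 + 1) * poly U (inverse z) * z ^ (4 * N + 2)"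
      using A[OF that] U[of "inverse z"] by simp
    also have "\<dots> = (z\<^sup>2 + 1) * (z ^ (4 * N) * poly U (inverse z))"
      using A[OF that] by (simp add: power_add field_simps power2_eq_square)
    finally show ?thesis
      using A[OF that] by simp
  qed
  moreover have "poly U (- z) = poly U z" if "z \<in> A" for z
    using A[OF that] U[of z] U[of "- z"] by (simp add: reflTrace_uminus)
  ultimately have expansion: "poly U z = (z\<^sup>2) ^ N * (coeff U (2 * N)
      + (\<Sum>j = 1..N. coeff U (2 * (N + j)) * ((z\<^sup>2) ^ j + inverse (z\<^sup>2) ^ j)))" if "z \<noteq> 0" for z
    using degU \<open>infinite A\<close> A(1) that by (intro poly_even_palindromic_expansion) auto
  show thesis
  proof (rule that[of "\<lambda>j. coeff U (2 * (N + j))"])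
    fix z :: complex assume "z \<noteq> 0"
    define S where "S = coeff U (2 * N)
        + (\<Sum>j = 1..N. coeff U (2 * (N + j)) * ((z\<^sup>2) ^ j + inverse (z\<^sup>2) ^ j))"
    have "z ^ (2 * N + 1) = (z\<^sup>2) ^ N * z"
      by (simp add: power_mult)
    then have "(z\<^sup>2) ^ N * (?\<tau> z * z) = (z\<^sup>2) ^ N * ((z\<^sup>2 + 1) * S)"
      using U[OF \<open>z \<noteq> 0\<close>] expansion[OF \<open>z \<noteq> 0\<close>] unfolding S_def[symmetric]
      by (simp only: mult_ac)
    then have "?\<tau> z * z = (z\<^sup>2 + 1) * S"
      using \<open>z \<noteq> 0\<close> by simp
    then have "?\<tau> z = (z + inverse z) * S"
      using \<open>z \<noteq> 0\<close> by (simp add: field_simps power2_eq_square)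
    then show "?\<tau> z = (z + inverse z) * (coeff U (2 * (N + 0))
        + (\<Sum>j = 1..N. coeff U (2 * (N + j)) * ((z\<^sup>2) ^ j + inverse (z\<^sup>2) ^ j)))"
      by (simp add: S_def)
  qed
qed

lemma reflHamiltonians_exist: "\<exists>P. reflHamiltonians N \<xi> a e f k P"
proof -
  obtain u where u: "\<And>z. z \<noteq> 0 \<Longrightarrow> reflTrace N \<xi> a e f k z
      = (z + inverse z) * (u 0 + (\<Sum>j = 1..N. u j * ((z\<^sup>2) ^ j + inverse (z\<^sup>2) ^ j)))"
    using reflTrace_expansion by blast
  define P where "P j = (if j = 0 then u 0 else 2 * u j)" for j
  have "reflHamiltonians N \<xi> a e f k P"
    unfolding reflHamiltonians_def Let_def
  proof (intro allI impI)
    fix z :: complex assume z: "z \<noteq> 0 \<and> z\<^sup>2 \<noteq> 1"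
    define S where "S = u 0 + (\<Sum>j = 1..N. u j * ((z\<^sup>2) ^ j + inverse (z\<^sup>2) ^ j))"
    have "P 0 + (\<Sum>j = 1..N. P j * ((z\<^sup>2) ^ j + inverse (z\<^sup>2) ^ j) / 2) = S"
      unfolding S_def P_def by (auto intro!: sum.cong)
    moreover have "z\<^sup>2 - 1 \<noteq> 0"
      using z by simp
    ultimately show "reflTransfer N \<xi> a e f k z = 1 / 2 * ((z\<^sup>2 + 1) / (z\<^sup>2 - 1))
        * (P 0 + (\<Sum>j = 1..N. P j * ((z\<^sup>2) ^ j + inverse (z\<^sup>2) ^ j) / 2))"
      using z u[of z] unfolding reflTransfer_eq_reflTrace S_def[symmetric]
      by (simp add: field_simps power2_eq_square)
  qed
  then show ?thesis by blast
qed

lemma eventually_at_1_nonzero: "\<forall>\<^sub>F z in at (1::complex). z \<noteq> 0 \<and> z\<^sup>2 \<noteq> 1"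
  unfolding eventually_at
proof (intro exI[of _ 1] conjI allI impI ballI)
  fix z :: complex assume z: "z \<noteq> 1 \<and> dist z 1 < 1"
  then show "z \<noteq> 0"
    by auto
  show "z\<^sup>2 \<noteq> 1"
    using z by (auto simp: power2_eq_1_iff dist_norm)
qed simp

lemma reflHamiltonians_tendsto:
  assumes "reflHamiltonians N \<xi> a e f k P"
  shows "((\<lambda>z. (z - inverse z) * reflTransfer N \<xi> a e f k z) \<longlongrightarrow> (\<Sum>j = 0..N. P j)) (at 1)"
proof -
  define g where "g z = 1 / 2 * (z + inverse z)
      * (P 0 + (\<Sum>j = 1..N. P j * ((z\<^sup>2) ^ j + inverse (z\<^sup>2) ^ j) / 2))" for z :: complex
  have "\<forall>\<^sub>F z in at 1. g z = (z - inverse z) * reflTransfer N \<xi> a e f k z"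
    using eventually_at_1_nonzero
  proof (rule eventually_mono)
    fix z :: complex assume z: "z \<noteq> 0 \<and> z\<^sup>2 \<noteq> 1"
    then have "z\<^sup>2 - 1 \<noteq> 0" by simp
    then show "g z = (z - inverse z) * reflTransfer N \<xi> a e f k z"
      using z assms unfolding reflHamiltonians_def Let_def g_def
      by (simp add: field_simps power2_eq_square)
  qed
  moreover have "isCont g 1"
    unfolding g_def by (intro continuous_intros) auto
  moreover have "g 1 = (\<Sum>j = 0..N. P j)"
    unfolding g_def by (simp add: sum.atLeast_Suc_atMost[of 0 N])
  ultimately show ?thesis
    unfolding isCont_def by (metis Lim_transform_eventually)
qed

lemma isCont_reflTrace_1: "isCont (reflTrace N \<xi> a e f k) 1"
proof -
  obtain u where u: "\<And>z. z \<noteq> 0 \<Longrightarrow> reflTrace N \<xi> a e f k z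
      = (z + inverse z) * (u 0 + (\<Sum>j = 1..N. u j * ((z\<^sup>2) ^ j + inverse (z\<^sup>2) ^ j)))"
    using reflTrace_expansion by blast
  have "\<forall>\<^sub>F z in nhds 1. reflTrace N \<xi> a e f k z
      = (z + inverse z) * (u 0 + (\<Sum>j = 1..N. u j * ((z\<^sup>2) ^ j + inverse (z\<^sup>2) ^ j)))"
    using t1_space_nhds[of "1::complex" 0] by (simp add: eventually_mono u)
  then show ?thesis
    by (subst isCont_cong) (auto intro!: continuous_intros)
qed

lemma reflTransfer_tendsto:
  "((\<lambda>z. (z - inverse z) * reflTransfer N \<xi> a e f k z) \<longlongrightarrow> reflTrace N \<xi> a e f k 1 / 2) (at 1)"
proof -
  have "\<forall>\<^sub>F z in at 1. reflTrace N \<xi> a e f k z / 2 = (z - inverse z) * reflTransfer N \<xi> a e f k z"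
    using eventually_at_1_nonzero
  proof (rule eventually_mono)
    fix z :: complex assume "z \<noteq> 0 \<and> z\<^sup>2 \<noteq> 1"
    then have "z - inverse z \<noteq> 0"
      by (auto simp: field_simps power2_eq_square)
    then show "reflTrace N \<xi> a e f k z / 2 = (z - inverse z) * reflTransfer N \<xi> a e f k z"
      unfolding reflTransfer_eq_reflTrace by (simp add: divide_simps del: divide_const_simps)
  qed
  moreover have "((\<lambda>z. reflTrace N \<xi> a e f k z / 2) \<longlongrightarrow> reflTrace N \<xi> a e f k 1 / 2) (at 1)"
    using isCont_reflTrace_1 unfolding isCont_def by (intro tendsto_divide tendsto_const) auto
  ultimately show ?thesis
    by (rule Lim_transform_eventually[rotated])
qed

theorem mainTheorem1:
  fixes N :: nat and \<xi> :: complex and a t e f k :: "nat \<Rightarrow> complex"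
  assumes N: "N \<ge> 1"
    and xi: "\<xi> \<noteq> 0"
    and a: "\<forall>j\<in>{1..N}. a j \<noteq> 0"
    and pt: "\<forall>j\<in>{1..N}. k j \<noteq> 0 \<and> (k j)\<^sup>2 + inverse ((k j)\<^sup>2) + e j * f j = t j"
  shows "(\<exists>P. reflHamiltonians N \<xi> a e f k P) \<and>
    (\<forall>P. reflHamiltonians N \<xi> a e f k P \<longrightarrow>
       ((\<lambda>z. (z - inverse z) * reflTransfer N \<xi> a e f k z) \<longlongrightarrow> (\<Sum>j = 0..N. P j)) (at 1) \<and>
       (\<Sum>j = 0..N. P j) = (\<xi> - inverse \<xi>) * (\<Prod>j = 1..N. t j - (a j)\<^sup>2 - inverse ((a j)\<^sup>2)))"
proof (intro conjI allI impI reflHamiltonians_exist)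
  fix P assume P: "reflHamiltonians N \<xi> a e f k P"
  show lim: "((\<lambda>z. (z - inverse z) * reflTransfer N \<xi> a e f k z) \<longlongrightarrow> (\<Sum>j = 0..N. P j)) (at 1)"
    using P by (rule reflHamiltonians_tendsto)
  have "(\<Sum>j = 0..N. P j) = reflTrace N \<xi> a e f k 1 / 2"
    using tendsto_unique[OF at_neq_bot lim reflTransfer_tendsto] .
  also have "\<dots> = (\<xi> - inverse \<xi>) * (\<Prod>j = 1..N. t j - (a j)\<^sup>2 - inverse ((a j)\<^sup>2))"
    using a pt by (subst reflTrace_at_1) auto
  finally show "(\<Sum>j = 0..N. P j) = (\<xi> - inverse \<xi>) * (\<Prod>j = 1..N. t j - (a j)\<^sup>2 - inverse ((a j)\<^sup>2))" .
qed

end
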